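(* Suppose $f$ is backward contracting and use the setup below (for a fixed $t>0$). Then for every sufficiently large integer $q\ge0$, $$\sum_{\mathbf n\in\mathcal S(q)}d^{k(\mathbf n)}\,\tau^{t\,p_{\mathbf n}(q)/d}\le 2^{1+t/d}\,d\,(1-2^{-t/d})^{-1}\big(R(\tau^q\delta_0)^{-1}\tau^{q-2}\big)^{t/d}.$$
   Context: Standing setting: $d\ge2$, $c\in\mathbb{C}$, $f(z)=z^d+c$, critical point $0$ non-periodic and recurrent, critical value $c$. $\tilde B(\delta)=B(0,\delta^{1/d})$; a pull-back of $V$ by $f^n$ is a connected component of $f^{-n}(V)$. $R(\delta)=\inf\{\delta/\mathrm{diam}(U): U$ a pull-back of $\tilde B(\delta)$ by some $f^n$, $n\ge0$, $c\in U\}$; $f$ is backward contracting iff $R(\delta)\to\infty$ as $\delta\to0$. A nice set is a topological disk $V\ni0$ with $f^n(\partial V)\cap V=\emptyset$ for all $n\ge1$; a child of $V$ is a pull-back $W\ni0$ of $V$ by some $f^m$, $m\ge1$, with $f^m:W\to V$ of degree $d$. Setup: $\tau=2^{-d}$. $\delta_0>0$ is such that $R(\delta)>2\tau^{-1}$ for all $\delta\in(0,\delta_0]$, and for each integer $q\ge0$, $V_q$ is a nice set with $\tilde B(\tau^q\delta_0/2)\subset V_q\subset\tilde B(\tau^q\delta_0)$ and $\sum_{Y\text{ child of }V_q}\mathrm{diam}(f(Y))^{t/d}\le(1-2^{-t/d})^{-1}(\tau^q\delta_0/R(\tau^q\delta_0))^{t/d}$. $\mathcal N(q)$ is the set of integers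 $n\ge1$ with $f^n(0)\in V_q$ such that the pull-back $W_n(q)$ of $V_q$ by $f^n$ containing $0$ is a child of $V_q$; $p_n(q)$ is the largest integer $p\ge q$ with $W_n(q)\subset V_{p+1}$. $\mathcal S(q)$ is the set of finite sequences $\mathbf n=(n_1,\dots,n_k)$, $k\ge1$, for which, with $p_0=q$ and $p_i=p_{n_i}(p_{i-1})$, $n_i\in\mathcal N(p_{i-1})$ for all $i$; $p_{\mathbf n}(q)=p_k$ and $k(\mathbf n)=k$. *)

theory Defs
  imports "HOL-Analysis.Analysis" "HOL-Computational_Algebra.Polynomial"
begin

definition fmap :: "nat \<Rightarrow> complex \<Rightarrow> complex \<Rightarrow> complex" where
  "fmap d c z = z ^ d + c"

text \<open>f as a polynomial, and its n-th iterate as a polynomial (used for local multiplicities).\<close>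
definition fpoly :: "nat \<Rightarrow> complex \<Rightarrow> complex poly" where
  "fpoly d c = monom 1 d + [:c:]"

definition iterp :: "nat \<Rightarrow> complex \<Rightarrow> nat \<Rightarrow> complex poly" where
  "iterp d c n = ((\<lambda>p. pcompose (fpoly d c) p) ^^ n) [:0, 1:]"

definition tB :: "nat \<Rightarrow> real \<Rightarrow> complex set" where
  "tB d \<delta> = ball 0 (\<delta> powr (1 / real d))"

definition pullback :: "nat \<Rightarrow> complex \<Rightarrow> complex set \<Rightarrow> nat \<Rightarrow> complex set \<Rightarrow> bool" where
  "pullback d c V n U \<longleftrightarrow>
     (\<exists>x \<in> (fmap d c ^^ n) -` V. U = connected_component_set ((fmap d c ^^ n) -` V) x)"

definition Rfun :: "nat \<Rightarrow> complex \<Rightarrow> real \<Rightarrow> real" where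
  "Rfun d c \<delta> = Inf {\<delta> / diameter U | U. \<exists>n. pullback d c (tB d \<delta>) n U \<and> c \<in> U}"

definition backward_contracting :: "nat \<Rightarrow> complex \<Rightarrow> bool" where
  "backward_contracting d c \<longleftrightarrow> filterlim (Rfun d c) at_top (at_right 0)"

definition nice :: "nat \<Rightarrow> complex \<Rightarrow> complex set \<Rightarrow> bool" where
  "nice d c V \<longleftrightarrow> V homeomorphic ball (0::complex) 1 \<and> 0 \<in> V \<and>
     (\<forall>n\<ge>1. (fmap d c ^^ n) ` frontier V \<inter> V = {})"

text \<open>Degree of f^m : W -> V, i.e. every point of V has exactly k preimages in W,
  counted with multiplicity (multiplicity = order of the root of f^m - w).\<close>
definition map_degree :: "nat \<Rightarrow> complex \<Rightarrow> nat \<Rightarrow> complex set \<Rightarrow> complex set \<Rightarrow> nat \<Rightarrow> bool" where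
  "map_degree d c m W V k \<longleftrightarrow>
     (\<forall>w\<in>V. (\<Sum>z \<in> W \<inter> (fmap d c ^^ m) -` {w}. order z (iterp d c m - [:w:])) = k)"

definition child_by :: "nat \<Rightarrow> complex \<Rightarrow> complex set \<Rightarrow> nat \<Rightarrow> complex set \<Rightarrow> bool" where
  "child_by d c V m W \<longleftrightarrow> m \<ge> 1 \<and> pullback d c V m W \<and> 0 \<in> W \<and> map_degree d c m W V d"

definition children :: "nat \<Rightarrow> complex \<Rightarrow> complex set \<Rightarrow> complex set set" where
  "children d c V = {W. \<exists>m. child_by d c V m W}"

definition tau :: "nat \<Rightarrow> real" where
  "tau d = 1 / 2 ^ d"

definition Wn :: "nat \<Rightarrow> complex \<Rightarrow> (nat \<Rightarrow> complex set) \<Rightarrow> nat \<Rightarrow> nat \<Rightarrow> complex set" where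
  "Wn d c V n q = connected_component_set ((fmap d c ^^ n) -` V q) 0"

definition Nset :: "nat \<Rightarrow> complex \<Rightarrow> (nat \<Rightarrow> complex set) \<Rightarrow> nat \<Rightarrow> nat set" where
  "Nset d c V q = {n. n \<ge> 1 \<and> (fmap d c ^^ n) 0 \<in> V q \<and> Wn d c V n q \<in> children d c (V q)}"

definition pn :: "nat \<Rightarrow> complex \<Rightarrow> (nat \<Rightarrow> complex set) \<Rightarrow> nat \<Rightarrow> nat \<Rightarrow> nat" where
  "pn d c V n q = (GREATEST p. q \<le> p \<and> Wn d c V n q \<subseteq> V (Suc p))"

fun pseq :: "nat \<Rightarrow> complex \<Rightarrow> (nat \<Rightarrow> complex set) \<Rightarrow> nat \<Rightarrow> nat list \<Rightarrow> nat" where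
  "pseq d c V q [] = q"
| "pseq d c V q (n # ns) = pseq d c V (pn d c V n q) ns"

fun admissible :: "nat \<Rightarrow> complex \<Rightarrow> (nat \<Rightarrow> complex set) \<Rightarrow> nat \<Rightarrow> nat list \<Rightarrow> bool" where
  "admissible d c V q [] = True"
| "admissible d c V q (n # ns) = (n \<in> Nset d c V q \<and> admissible d c V (pn d c V n q) ns)"

text \<open>S(q); for a sequence ns, k(ns) = length ns.\<close>
definition Sset :: "nat \<Rightarrow> complex \<Rightarrow> (nat \<Rightarrow> complex set) \<Rightarrow> nat \<Rightarrow> nat list set" where
  "Sset d c V q = {ns. ns \<noteq> [] \<and> admissible d c V q ns}"

end

theory Submission
  imports Defs
begin

(* Write F = f = z^d + c, tau = 2^-d, delta_q = tau^q delta0 and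
   R_q = R(delta_q).  Every admissible sequence (n, ns) in S(q) starts with some n in N(q)
   and continues with a sequence in S(p_n(q)), so it suffices to control the one-step sum
   Sum_{n in N(q)} tau^{t p_n(q)/d} and then to iterate.
   (1) Topology of f: iterates are continuous, have bounded preimages and are open maps, so
       f^n maps each pull-back of a bounded domain V onto V.
   (2) Backward contraction: a connected set S containing 0 with f^j(S) in B~(delta) has
       diam f(S) <= delta/R(delta).  Hence W_n(q) lies in V_{q+1}, p_n(q) is well defined,
       and the maximality of p_n(q) gives diam f(W_n(q)) >= tau^{p_n(q)+2} delta0/2.
   (3) n |-> W_n(q) is injective on N(q) (a nice set is never mapped into itself), so the
       hypothesis on the children of V_q bounds the one-step sum by A(q), a constant
       multiple of (tau^{q-2}/R_q)^{t/d}.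
   (4) Since R_q -> infinity, eventually 2 d A(p) <= tau^{t p/d}; an induction on the length
       of the sequences then bounds every finite partial sum over S(q) by 2 d A(q), which is
       exactly the asserted bound. *)

lemma continuous_on_fmap: "continuous_on S (fmap d c)"
  unfolding fmap_def by (intro continuous_intros)

lemma continuous_on_fmap_iter: "continuous_on S (fmap d c ^^ n)"
proof (induction n arbitrary: S)
  case 0
  then show ?case by (simp add: continuous_on_id)
next
  case (Suc n)
  show ?case
    unfolding funpow.simps(2) by (rule continuous_on_compose[OF Suc.IH continuous_on_fmap])
qed

lemma fmap_zero: "d \<ge> 1 \<Longrightarrow> fmap d c 0 = c"
  by (simp add: fmap_def zero_power)

lemma dist_fmap_critical_value:
  assumes "d \<ge> 1"
  shows "dist (fmap d c z) (fmap d c 0) = norm z ^ d"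
  using assms by (simp add: fmap_def dist_norm norm_power zero_power)

lemma mem_tB:
  assumes "a > 0" "d > 0"
  shows "z \<in> tB d a \<longleftrightarrow> norm z ^ d < a"
proof -
  define b where "b = a powr (1 / real d)"
  have b: "b > 0" "b ^ d = a" using assms by (auto simp: b_def powr_power)
  have "norm z < b \<longleftrightarrow> norm z ^ d < b ^ d"
  proof
    assume "norm z < b"
    then show "norm z ^ d < b ^ d" using assms by (intro power_strict_mono) auto
  next
    assume "norm z ^ d < b ^ d"
    then show "norm z < b" using b(1) by (intro power_less_imp_less_base[of _ d b]) auto
  qed
  then show ?thesis using b by (simp add: tB_def b_def)
qed

lemma bounded_vimage_fmap:
  assumes "d \<ge> 1" "bounded S"
  shows "bounded (fmap d c -` S)"
proof -
  obtain B where B: "\<And>x. x \<in> S \<Longrightarrow> norm x \<le> B" using assms(2) bounded_iff by blast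
  have "norm z \<le> max 1 (B + norm c)" if "fmap d c z \<in> S" for z
  proof -
    have "norm (z ^ d + c) \<le> B" using B that by (simp add: fmap_def)
    then have nd: "norm z ^ d \<le> B + norm c"
      using norm_triangle_ineq4[of "z ^ d + c" c] by (simp add: norm_power)
    show ?thesis
    proof (cases "norm z \<le> 1")
      case False
      then have "norm z ^ 1 \<le> norm z ^ d" using assms(1) by (intro power_increasing) auto
      then show ?thesis using nd by simp
    qed simp
  qed
  then show ?thesis unfolding bounded_iff by blast
qed

lemma bounded_vimage_fmap_iter:
  assumes "d \<ge> 1" "bounded S"
  shows "bounded ((fmap d c ^^ n) -` S)"
  using assms(2)
proof (induction n arbitrary: S)
  case (Suc n)
  have "(fmap d c ^^ Suc n) -` S = fmap d c -` ((fmap d c ^^ n) -` S)"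
    by (simp only: funpow_Suc_right vimage_comp)
  then show ?case using bounded_vimage_fmap[OF assms(1) Suc.IH[OF Suc.prems]] by metis
qed simp

lemma bounded_pullback:
  assumes "d \<ge> 1" "pullback d c V n U" "bounded V"
  shows "bounded U"
proof -
  obtain x where "U = connected_component_set ((fmap d c ^^ n) -` V) x"
    using assms(2) unfolding pullback_def by blast
  then have "U \<subseteq> (fmap d c ^^ n) -` V" using connected_component_subset by blast
  then show ?thesis using bounded_vimage_fmap_iter[OF assms(1,3)] bounded_subset by blast
qed

text \<open>z^d is an open map: a covering away from 0, and it maps small disks around 0 onto disks.\<close>
lemma open_image_power:
  assumes "d \<ge> 1" "open S"
  shows "open ((\<lambda>z::complex. z ^ d) ` S)"
proof -
  let ?P = "\<lambda>z::complex. z ^ d"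
  have cov: "covering_space (- {0}) ?P (- {0})"
    using covering_space_power_punctured_plane assms by simp
  have punctured: "open (?P ` (S - {0}))"
  proof -
    have "openin (top_of_set (- {0})) (S - {0})" using assms
      by (auto simp: openin_open intro!: exI[of _ S])
    then have "openin (top_of_set (- {0})) (?P ` (S - {0}))"
      by (rule covering_space_open_map[OF cov])
    then show ?thesis using openin_open_trans by blast
  qed
  show ?thesis
    unfolding open_subopen[of "?P ` S"]
  proof
    fix w assume "w \<in> ?P ` S"
    then obtain z where z: "z \<in> S" "w = z ^ d" by blast
    show "\<exists>T. open T \<and> w \<in> T \<and> T \<subseteq> ?P ` S"
    proof (cases "z = 0")
      case False
      then show ?thesis using z punctured by (intro exI[of _ "?P ` (S - {0})"]) auto
    next
      case True
      obtain r where r: "r > 0" "ball 0 r \<subseteq> S"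
        using assms(2) z True open_contains_ball by blast
      have "ball 0 (r ^ d) \<subseteq> ?P ` S"
      proof
        fix y :: complex assume y: "y \<in> ball 0 (r ^ d)"
        obtain u where u: "y = u ^ d" using exists_complex_root[of d y] assms(1) by auto
        have "norm u ^ d < r ^ d" using y u by (simp add: norm_power)
        then have "norm u < r" using r by (meson less_eq_real_def power_less_imp_less_base)
        then show "y \<in> ?P ` S" using r u by auto
      qed
      moreover have "w \<in> ball 0 (r ^ d)" using z True r assms(1) by (simp add: zero_power)
      ultimately show ?thesis by blast
    qed
  qed
qed

lemma open_image_fmap_iter:
  assumes "d \<ge> 1" "open S"
  shows "open ((fmap d c ^^ n) ` S)"
proof (induction n)
  case (Suc n)
  have "(fmap d c ^^ Suc n) ` S = (\<lambda>x. c + x) ` ((\<lambda>z. z ^ d) ` ((fmap d c ^^ n) ` S))"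
    by (simp add: image_comp fmap_def o_def add.commute)
  then show ?case using open_translation open_image_power[OF assms(1) Suc.IH] by metis
qed (use assms in simp)

text \<open>An iterate of f maps every pull-back of a bounded domain V onto V: the image of a
  component is open (open mapping) and relatively closed in V (properness).\<close>
lemma fmap_iter_component_onto:
  assumes d: "d \<ge> 1" and oV: "open V" and cV: "connected V" and bV: "bounded V"
    and x: "x \<in> (fmap d c ^^ n) -` V"
  shows "(fmap d c ^^ n) ` connected_component_set ((fmap d c ^^ n) -` V) x = V"
proof -
  define G where "G = fmap d c ^^ n"
  define S where "S = G -` V"
  define W where "W = connected_component_set S x"
  have oS: "open S" unfolding S_def G_def
    by (rule continuous_imp_open_vimage[OF continuous_on_fmap_iter open_UNIV oV]) simp
  have oW: "open W" unfolding W_def by (rule open_connected_component[OF oS])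
  have WS: "W \<subseteq> S" unfolding W_def by (rule connected_component_subset)
  have "bounded S" unfolding S_def G_def by (rule bounded_vimage_fmap_iter[OF d bV])
  then have bW: "bounded W" by (rule bounded_subset[OF _ WS])
  define T where "T = G ` W"
  have oT: "open T" unfolding T_def G_def using open_image_fmap_iter[OF d oW] .
  have TV: "T \<subseteq> V" using WS unfolding T_def S_def by auto
  have "x \<in> W" using x unfolding W_def S_def G_def by (simp add: connected_component_refl)
  then have Tne: "T \<noteq> {}" unfolding T_def by blast
  have closed_in_V: "V \<inter> closure T \<subseteq> T"
  proof
    fix y assume y: "y \<in> V \<inter> closure T"
    have "compact (G ` closure W)" unfolding G_def
      using bW by (intro compact_continuous_image continuous_on_fmap_iter) (rule compact_closure[THEN iffD2])
    moreover have "T \<subseteq> G ` closure W" unfolding T_def using closure_subset by (rule image_mono)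
    ultimately have "closure T \<subseteq> G ` closure W" using closure_minimal compact_imp_closed by blast
    then obtain z where z: "z \<in> closure W" "y = G z" using y by auto
    have zS: "z \<in> S" using y z by (simp add: S_def)
    obtain C where C: "closed C" "W = S \<inter> C"
      using closedin_connected_component[of S x] unfolding W_def closedin_closed by blast
    have "closure W \<subseteq> C" using C closure_minimal by blast
    then have "z \<in> W" using C zS z by blast
    then show "y \<in> T" using z T_def by auto
  qed
  have "openin (top_of_set V) T" using oT TV by (auto simp: openin_open intro!: exI[of _ T])
  moreover have "closedin (top_of_set V) T" using closed_in_V TV closure_subset[of T]
    by (auto simp: closedin_closed intro!: exI[of _ "closure T"])
  ultimately have "T = V" using cV Tne unfolding connected_clopen by blast
  then show ?thesis by (simp add: T_def W_def S_def G_def)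
qed


text \<open>The standing hypotheses of the theorem.\<close>
locale backward_setup =
  fixes d :: nat and c :: complex and t \<delta>0 :: real and V :: "nat \<Rightarrow> complex set"
  assumes d2: "d \<ge> 2"
    and nonper: "\<forall>n\<ge>1. (fmap d c ^^ n) 0 \<noteq> 0"
    and bc: "backward_contracting d c"
    and tpos: "t > 0"
    and d0pos: "\<delta>0 > 0"
    and Rbig: "\<forall>\<delta>. 0 < \<delta> \<and> \<delta> \<le> \<delta>0 \<longrightarrow> Rfun d c \<delta> > 2 / tau d"
    and Vnice: "\<forall>q. nice d c (V q)"
    and Vin: "\<forall>q. tB d (tau d ^ q * \<delta>0 / 2) \<subseteq> V q \<and> V q \<subseteq> tB d (tau d ^ q * \<delta>0)"
    and Vsum: "\<forall>q. infsum (\<lambda>Y. ennreal (diameter (fmap d c ` Y) powr (t / real d)))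
                        (children d c (V q))
                 \<le> ennreal ((1 - 2 powr (- t / real d)) powr (-1)
                      * (tau d ^ q * \<delta>0 / Rfun d c (tau d ^ q * \<delta>0)) powr (t / real d))"
begin

abbreviation "F \<equiv> fmap d c"
abbreviation "\<tau> \<equiv> tau d"

lemma d1: "d \<ge> 1" and dpos: "d > 0"
  using d2 by auto

lemma tau_pos: "\<tau> > 0" and tau_le: "\<tau> \<le> 1/4" and tau_lt1: "\<tau> < 1"
proof -
  show "\<tau> > 0" by (simp add: tau_def)
  have "(2::real) ^ 2 \<le> 2 ^ d" using d2 by (intro power_increasing) auto
  then show "\<tau> \<le> 1/4" by (simp add: tau_def divide_simps)
  then show "\<tau> < 1" by simp
qed

lemma scale_pos: "\<tau> ^ q * \<delta>0 > 0"
  using tau_pos d0pos by simp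

lemma scale_le: "\<tau> ^ q * \<delta>0 \<le> \<delta>0"
  using tau_pos tau_lt1 d0pos by (simp add: power_le_one mult_le_cancel_right1)

lemma R_pos: "0 < \<delta> \<Longrightarrow> \<delta> \<le> \<delta>0 \<Longrightarrow> Rfun d c \<delta> > 0"
  using Rbig tau_pos by (smt (verit) divide_pos_pos)

text \<open>The contraction factor beats the scale ratio tau/2 between consecutive V_q.\<close>
lemma contraction_small: "0 < \<delta> \<Longrightarrow> \<delta> \<le> \<delta>0 \<Longrightarrow> \<delta> / Rfun d c \<delta> < \<tau> * \<delta> / 2"
proof -
  assume a: "0 < \<delta>" "\<delta> \<le> \<delta>0"
  have R: "2 / \<tau> < Rfun d c \<delta>" using Rbig a by blast
  have "0 < Rfun d c \<delta> * (2 / \<tau>)" using R_pos[OF a] tau_pos by simp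
  then have "\<delta> / Rfun d c \<delta> < \<delta> / (2 / \<tau>)"
    by (rule divide_strict_left_mono[OF R a(1)])
  then show ?thesis by (simp add: mult.commute)
qed

text \<open>A nice set is homeomorphic to a disk, hence open (invariance of domain) and connected.\<close>
lemma V_props: "open (V q)" "connected (V q)" "bounded (V q)" "0 \<in> V q"
proof -
  have n: "nice d c (V q)" using Vnice by blast
  then have h: "ball (0::complex) 1 homeomorphic V q"
    unfolding nice_def using homeomorphic_sym by blast
  then obtain f g where fg: "homeomorphism (ball (0::complex) 1) (V q) f g"
    unfolding homeomorphic_def by blast
  have "open (f ` ball 0 1)"
  proof (rule invariance_of_domain)
    show "continuous_on (ball 0 1) f" using fg homeomorphism_def by blast
    show "inj_on f (ball 0 1)" by (rule inj_on_inverseI[of _ g]) (rule homeomorphism_apply1[OF fg])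
  qed simp
  moreover have "f ` ball 0 1 = V q" using fg unfolding homeomorphism_def by (elim conjE)
  ultimately show "open (V q)" by simp
  show "connected (V q)" using homeomorphic_connectedness[OF h] connected_ball by (rule iffD1)
  have "V q \<subseteq> tB d (\<tau> ^ q * \<delta>0)" using Vin by simp
  then show "bounded (V q)" unfolding tB_def by (rule bounded_subset[OF bounded_ball])
  show "0 \<in> V q" using n unfolding nice_def by blast
qed

lemma pullback_diameter_le:
  assumes "0 < \<delta>" "\<delta> \<le> \<delta>0" "pullback d c (tB d \<delta>) n U" "c \<in> U"
  shows "bounded U" "diameter U \<le> \<delta> / Rfun d c \<delta>"
proof -
  show bU: "bounded U" using bounded_pullback[OF d1 assms(3)] by (simp add: tB_def)
  define X where "X = {\<delta> / diameter U | U. \<exists>n. pullback d c (tB d \<delta>) n U \<and> c \<in> U}"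
  have bdd: "bdd_below X"
  proof (rule bdd_belowI[of _ 0])
    fix x assume "x \<in> X"
    then obtain U' n' where "x = \<delta> / diameter U'" "pullback d c (tB d \<delta>) n' U'"
      by (auto simp: X_def)
    moreover from this(2) have "bounded U'" using bounded_pullback[OF d1] by (simp add: tB_def)
    ultimately show "0 \<le> x" using assms(1) diameter_ge_0[of U'] by simp
  qed
  have "\<delta> / diameter U \<in> X" using assms X_def by blast
  then have le: "Rfun d c \<delta> \<le> \<delta> / diameter U"
    unfolding Rfun_def X_def[symmetric] using bdd by (rule cInf_lower)
  have R: "Rfun d c \<delta> > 0" using R_pos[OF assms(1,2)] .
  then have "diameter U > 0" using le diameter_ge_0[OF bU] by (cases "diameter U = 0") auto
  then show "diameter U \<le> \<delta> / Rfun d c \<delta>" using le R by (simp add: field_simps)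
qed

lemma contracted_image:
  assumes "0 < \<delta>" "\<delta> \<le> \<delta>0" "j \<ge> 1" "connected S" "0 \<in> S" "(F ^^ j) ` S \<subseteq> tB d \<delta>"
  shows "bounded (F ` S)" "diameter (F ` S) \<le> \<delta> / Rfun d c \<delta>"
    "\<And>z. z \<in> S \<Longrightarrow> norm z ^ d \<le> \<delta> / Rfun d c \<delta>"
proof -
  obtain j' where j: "j = Suc j'" using assms(3) by (cases j) auto
  have cFS: "connected (F ` S)" using connected_continuous_image[OF continuous_on_fmap assms(4)] .
  have cin: "c \<in> F ` S" using assms(5) fmap_zero[OF d1, of c] by (metis image_eqI)
  have sub: "F ` S \<subseteq> (F ^^ j') -` tB d \<delta>"
    using assms(6) unfolding j funpow_Suc_right by auto
  define U where "U = connected_component_set ((F ^^ j') -` tB d \<delta>) c"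
  have pU: "pullback d c (tB d \<delta>) j' U" unfolding pullback_def U_def using sub cin by blast
  have FU: "F ` S \<subseteq> U" unfolding U_def by (rule connected_component_maximal[OF cin cFS sub])
  note U = pullback_diameter_le[OF assms(1,2) pU subsetD[OF FU cin]]
  show bFS: "bounded (F ` S)" using bounded_subset[OF U(1) FU] .
  show dFS: "diameter (F ` S) \<le> \<delta> / Rfun d c \<delta>" using diameter_subset[OF FU U(1)] U(2) by simp
  fix z assume "z \<in> S"
  then have "dist (F z) (F 0) \<le> diameter (F ` S)"
    using diameter_bounded_bound[OF bFS] assms(5) by blast
  then show "norm z ^ d \<le> \<delta> / Rfun d c \<delta>"
    using dFS by (simp add: dist_fmap_critical_value[OF d1])
qed

text \<open>No iterate maps V_q into itself: otherwise V_q, which contains the disk B~(delta_q/2),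
  would be contained in the much smaller disk given by backward contraction.\<close>
lemma not_self_map:
  assumes j: "j \<ge> 1"
  shows "\<not> (F ^^ j) ` V q \<subseteq> V q"
proof
  assume sub: "(F ^^ j) ` V q \<subseteq> V q"
  define \<delta> where "\<delta> = \<tau> ^ q * \<delta>0"
  have \<delta>: "\<delta> > 0" "\<delta> \<le> \<delta>0" using scale_pos scale_le by (auto simp: \<delta>_def)
  have "(F ^^ j) ` V q \<subseteq> tB d \<delta>" using sub Vin by (auto simp: \<delta>_def)
  note small = contracted_image(3)[OF \<delta> j V_props(2,4) this]
  define z0 where "z0 = complex_of_real ((\<delta> / 4) powr (1 / real d))"
  have nz: "norm z0 ^ d = \<delta> / 4" using \<delta> dpos by (simp add: z0_def powr_power)
  then have "z0 \<in> tB d (\<delta> / 2)" using mem_tB[OF _ dpos, of "\<delta> / 2" z0] \<delta> by simp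
  then have "z0 \<in> V q" using Vin by (auto simp: \<delta>_def)
  then have "\<delta> / 4 < \<tau> * \<delta> / 2" using small nz contraction_small[OF \<delta>] by force
  moreover have "\<tau> * \<delta> / 2 \<le> \<delta> / 8" using tau_le \<delta> by (simp add: field_simps)
  ultimately show False using \<delta> by simp
qed


lemma Wn_basic:
  assumes n: "n \<in> Nset d c V q"
  shows "0 \<in> Wn d c V n q" "connected (Wn d c V n q)" "(F ^^ n) ` Wn d c V n q \<subseteq> V q"
    "Wn d c V n q \<subseteq> V (Suc q)" "bounded (F ` Wn d c V n q)"
proof -
  have n1: "n \<ge> 1" and n0: "(F ^^ n) 0 \<in> V q" using n by (auto simp: Nset_def)
  show W0: "0 \<in> Wn d c V n q" unfolding Wn_def using n0 by (simp add: connected_component_refl)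
  show cW: "connected (Wn d c V n q)" unfolding Wn_def by (rule connected_connected_component)
  show im: "(F ^^ n) ` Wn d c V n q \<subseteq> V q"
    unfolding Wn_def using connected_component_subset by blast
  then have "(F ^^ n) ` Wn d c V n q \<subseteq> tB d (\<tau> ^ q * \<delta>0)" using Vin by blast
  note contr = contracted_image[OF scale_pos scale_le n1 cW W0 this]
  show "bounded (F ` Wn d c V n q)" by (rule contr(1))
  show "Wn d c V n q \<subseteq> V (Suc q)"
  proof
    fix z assume z: "z \<in> Wn d c V n q"
    have "norm z ^ d \<le> \<tau> ^ q * \<delta>0 / Rfun d c (\<tau> ^ q * \<delta>0)" using contr(3)[OF z] .
    also have "\<dots> < \<tau> * (\<tau> ^ q * \<delta>0) / 2" by (rule contraction_small[OF scale_pos scale_le])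
    finally have "z \<in> tB d (\<tau> ^ Suc q * \<delta>0 / 2)"
      using mem_tB[OF _ dpos] scale_pos[of "Suc q"] by (simp add: mult.assoc)
    then show "z \<in> V (Suc q)" using Vin by blast
  qed
qed

text \<open>W_n(q) contains a non-zero point: as a child, it contains a preimage of 0 under some
  f^m with m \<ge> 1, and 0 itself is not such a preimage since 0 is not periodic.\<close>
lemma Wn_nonzero_point:
  assumes n: "n \<in> Nset d c V q"
  obtains z where "z \<in> Wn d c V n q" "z \<noteq> 0"
proof -
  define W where "W = Wn d c V n q"
  have "W \<in> children d c (V q)" using n by (simp add: Nset_def W_def)
  then obtain m where m1: "m \<ge> 1" and deg: "map_degree d c m W (V q) d"
    by (auto simp: children_def child_by_def)
  then have "(\<Sum>z \<in> W \<inter> (F ^^ m) -` {0}. order z (iterp d c m - [:0:])) = d"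
    using V_props(4) unfolding map_degree_def by blast
  then have "W \<inter> (F ^^ m) -` {0} \<noteq> {}" using d2 by auto
  then obtain z where z: "z \<in> W" "(F ^^ m) z = 0" by blast
  then have "z \<noteq> 0" using nonper m1 by auto
  then show ?thesis using that z W_def by blast
qed

text \<open>The defining properties of p_n(q): W_n(q) lies in V_{p+1} but not in V_{p+2}.  The
  greatest element exists because the non-zero point of W_n(q) leaves all small V_p.\<close>
lemma pn_props:
  assumes n: "n \<in> Nset d c V q"
  defines "p \<equiv> pn d c V n q"
  shows "q \<le> p" "Wn d c V n q \<subseteq> V (Suc p)" "\<not> Wn d c V n q \<subseteq> V (Suc (Suc p))"
proof -
  define W where "W = Wn d c V n q"
  define P where "P = (\<lambda>p'. q \<le> p' \<and> W \<subseteq> V (Suc p'))"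
  have Pq: "P q" using Wn_basic(4)[OF n] by (simp add: P_def W_def)
  obtain z where z: "z \<in> W" "z \<noteq> 0" using Wn_nonzero_point[OF n] W_def by blast
  obtain b where b: "\<tau> ^ b < norm z ^ d / \<delta>0"
    using real_arch_pow_inv[of "norm z ^ d / \<delta>0" \<tau>] z d0pos tau_lt1 by auto
  have bound: "p' \<le> b" if "P p'" for p'
  proof (rule ccontr)
    assume "\<not> p' \<le> b"
    then have "\<tau> ^ Suc p' \<le> \<tau> ^ b" using tau_pos tau_lt1 by (intro power_decreasing) auto
    moreover have "z \<in> V (Suc p')" using that z by (auto simp: P_def)
    then have "z \<in> tB d (\<tau> ^ Suc p' * \<delta>0)" using Vin by blast
    then have "norm z ^ d < \<tau> ^ Suc p' * \<delta>0" using mem_tB[OF scale_pos dpos] by blast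
    ultimately have "norm z ^ d < \<tau> ^ b * \<delta>0" using d0pos by (smt (verit) mult_right_mono)
    then show False using b d0pos by (simp add: field_simps)
  qed
  have pG: "p = Greatest P" unfolding p_def pn_def P_def W_def by simp
  have PG: "P p" unfolding pG by (rule GreatestI_nat[of P q b, OF Pq bound])
  then show "q \<le> p" "Wn d c V n q \<subseteq> V (Suc p)" by (auto simp: P_def W_def)
  show "\<not> Wn d c V n q \<subseteq> V (Suc (Suc p))"
  proof
    assume "Wn d c V n q \<subseteq> V (Suc (Suc p))"
    then have "P (Suc p)" using PG by (auto simp: P_def W_def)
    then have "Suc p \<le> Greatest P" by (rule Greatest_le_nat[of P "Suc p" b, OF _ bound])
    then show False using pG by simp
  qed
qed

text \<open>Since W_n(q) is not inside V_{p+2}, its image under f has diameter comparable with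
  the scale delta_{p+2}; this turns the weight tau^{t p_n(q)/d} into a child diameter.\<close>
lemma diameter_image_Wn_ge:
  assumes n: "n \<in> Nset d c V q"
  shows "\<tau> ^ (pn d c V n q + 2) * \<delta>0 / 2 \<le> diameter (F ` Wn d c V n q)"
proof -
  define p where "p = pn d c V n q"
  obtain z where z: "z \<in> Wn d c V n q" "z \<notin> V (Suc (Suc p))"
    using pn_props(3)[OF n] by (auto simp: p_def)
  then have "z \<notin> tB d (\<tau> ^ Suc (Suc p) * \<delta>0 / 2)" using Vin by blast
  then have "\<tau> ^ (p + 2) * \<delta>0 / 2 \<le> norm z ^ d"
    using mem_tB[OF _ dpos] scale_pos[of "Suc (Suc p)"] by simp
  also have "\<dots> = dist (F z) (F 0)" by (simp add: dist_fmap_critical_value[OF d1])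
  also have "\<dots> \<le> diameter (F ` Wn d c V n q)"
    using diameter_bounded_bound[OF Wn_basic(5)[OF n]] z Wn_basic(1)[OF n] by simp
  finally show ?thesis by (simp add: p_def)
qed

lemma weight_le_diameter:
  assumes n: "n \<in> Nset d c V q"
  shows "\<tau> powr (t * real (pn d c V n q) / real d)
     \<le> (2 / (\<tau> ^ 2 * \<delta>0)) powr (t / real d) * diameter (F ` Wn d c V n q) powr (t / real d)"
proof -
  define p where "p = pn d c V n q"
  define D where "D = diameter (F ` Wn d c V n q)"
  have "\<tau> ^ p * (\<tau> ^ 2 * \<delta>0) \<le> 2 * D"
    using diameter_image_Wn_ge[OF n] by (simp add: p_def D_def power_add power2_eq_square algebra_simps)
  then have tp: "\<tau> ^ p \<le> 2 / (\<tau> ^ 2 * \<delta>0) * D" using tau_pos d0pos by (simp add: field_simps)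
  have "\<tau> powr (t * real p / real d) = (\<tau> ^ p) powr (t / real d)"
    using tau_pos by (simp add: powr_realpow[symmetric] powr_powr ac_simps)
  also have "\<dots> \<le> (2 / (\<tau> ^ 2 * \<delta>0) * D) powr (t / real d)"
    using powr_mono2[OF _ _ tp] tpos tau_pos by simp
  also have "\<dots> = (2 / (\<tau> ^ 2 * \<delta>0)) powr (t / real d) * D powr (t / real d)"
    by (rule powr_mult)
  finally show ?thesis by (simp add: p_def D_def)
qed

text \<open>Distinct elements of N(q) give distinct children: if W_{n1}(q) = W_{n2}(q) with n1 < n2,
  then f^{n2 - n1} would map V_q = f^{n1}(W) into V_q.\<close>
lemma inj_on_Wn: "inj_on (\<lambda>n. Wn d c V n q) (Nset d c V q)"
proof -
  have False if n1: "n1 \<in> Nset d c V q" and n2: "n2 \<in> Nset d c V q" and lt: "n1 < n2"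
    and eq: "Wn d c V n1 q = Wn d c V n2 q" for n1 n2
  proof -
    have "(F ^^ n1) ` Wn d c V n1 q = V q" unfolding Wn_def
      using fmap_iter_component_onto[OF d1 V_props(1-3)] n1 by (auto simp: Nset_def)
    moreover have "F ^^ n2 = (F ^^ (n2 - n1)) \<circ> (F ^^ n1)"
      using lt by (metis funpow_add le_add_diff_inverse2 less_imp_le)
    ultimately have "(F ^^ (n2 - n1)) ` V q \<subseteq> V q"
      using Wn_basic(3)[OF n2] eq by (metis image_comp)
    then show False using not_self_map[of "n2 - n1" q] lt by simp
  qed
  then show ?thesis by (intro inj_onI) (metis linorder_neqE_nat)
qed

definition "K = (1 - 2 powr (- t / real d)) powr (-1)"
definition "Rq q = Rfun d c (\<tau> ^ q * \<delta>0)"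
definition "A q = 2 powr (t / real d) * K * (Rq q powr (-1) * \<tau> powr (real q - 2)) powr (t / real d)"

lemma K_pos: "K > 0"
proof -
  have "2 powr (- t / real d) < 2 powr 0" using tpos dpos by (intro powr_less_mono) auto
  then show ?thesis unfolding K_def by simp
qed

lemma Rq_pos: "Rq q > 0"
  unfolding Rq_def by (rule R_pos[OF scale_pos scale_le])

lemma A_nonneg: "A q \<ge> 0"
  unfolding A_def using K_pos by simp

lemma children_sum_le:
  assumes "finite Ys" "Ys \<subseteq> children d c (V q)"
  shows "(\<Sum>Y\<in>Ys. diameter (F ` Y) powr (t / real d)) \<le> K * (\<tau> ^ q * \<delta>0 / Rq q) powr (t / real d)"
proof -
  let ?g = "\<lambda>Y. ennreal (diameter (F ` Y) powr (t / real d))"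
  have "ennreal (\<Sum>Y\<in>Ys. diameter (F ` Y) powr (t / real d)) = (\<Sum>Y\<in>Ys. ?g Y)"
    by (rule sum_ennreal[symmetric]) simp
  also have "\<dots> \<le> (SUP Zs\<in>{Zs. finite Zs \<and> Zs \<subseteq> children d c (V q)}. sum ?g Zs)"
    using assms by (intro SUP_upper) auto
  also have "\<dots> = infsum ?g (children d c (V q))"
    by (rule nonneg_infsum_complete[symmetric]) simp
  also have "\<dots> \<le> ennreal (K * (\<tau> ^ q * \<delta>0 / Rq q) powr (t / real d))"
    using Vsum unfolding K_def Rq_def by blast
  finally show ?thesis using K_pos by (subst (asm) ennreal_le_iff) auto
qed

lemma Nset_sum_le:
  assumes "finite H" "H \<subseteq> Nset d c V q"
  shows "(\<Sum>n\<in>H. \<tau> powr (t * real (pn d c V n q) / real d)) \<le> A q"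
proof -
  define e where "e = t / real d"
  define C where "C = (2 / (\<tau> ^ 2 * \<delta>0)) powr e"
  have "(\<Sum>n\<in>H. \<tau> powr (t * real (pn d c V n q) / real d))
      \<le> (\<Sum>n\<in>H. C * diameter (F ` Wn d c V n q) powr e)"
    using weight_le_diameter assms(2) unfolding C_def e_def by (intro sum_mono) blast
  also have "\<dots> = C * (\<Sum>Y\<in>(\<lambda>n. Wn d c V n q) ` H. diameter (F ` Y) powr e)"
    using inj_on_subset[OF inj_on_Wn assms(2)] by (simp add: sum.reindex sum_distrib_left)
  also have "\<dots> \<le> C * (K * (\<tau> ^ q * \<delta>0 / Rq q) powr e)"
    unfolding e_def C_def using assms
    by (intro mult_left_mono children_sum_le) (auto simp: Nset_def)
  also have "\<dots> = A q"
  proof -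
    have "\<tau> powr (real q - 2) = \<tau> ^ q / \<tau> ^ 2"
      using tau_pos by (simp add: powr_diff powr_realpow)
    moreover have "Rq q powr (-1) = 1 / Rq q" using Rq_pos[of q] by (simp add: powr_minus_divide)
    ultimately have "2 / (\<tau> ^ 2 * \<delta>0) * (\<tau> ^ q * \<delta>0 / Rq q) = 2 * (Rq q powr (-1) * \<tau> powr (real q - 2))"
      using d0pos tau_pos Rq_pos[of q] by (simp add: field_simps)
    then have "C * (\<tau> ^ q * \<delta>0 / Rq q) powr e = 2 powr e * (Rq q powr (-1) * \<tau> powr (real q - 2)) powr e"
      unfolding C_def by (metis powr_mult)
    then show ?thesis unfolding A_def e_def by (simp add: ac_simps)
  qed
  finally show ?thesis .
qed

lemma A_eq: "A p = 2 powr (t / real d) * K * \<tau> powr (- 2 * (t / real d))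
                 * \<tau> powr (t * real p / real d) * Rq p powr (- (t / real d))"
proof -
  have "(Rq p powr (-1) * \<tau> powr (real p - 2)) powr (t / real d)
      = (Rq p powr (-1)) powr (t / real d) * (\<tau> powr (real p - 2)) powr (t / real d)"
    by (rule powr_mult)
  also have "\<dots> = Rq p powr (- (t / real d)) * \<tau> powr ((real p - 2) * (t / real d))"
    unfolding powr_powr by simp
  also have "(real p - 2) * (t / real d) = - 2 * (t / real d) + t * real p / real d"
    by (simp add: algebra_simps)
  finally have E: "(Rq p powr (-1) * \<tau> powr (real p - 2)) powr (t / real d)
      = Rq p powr (- (t / real d)) * \<tau> powr (- 2 * (t / real d) + t * real p / real d)" .
  show ?thesis unfolding A_def E powr_add by (simp only: mult_ac)
qed

lemma Rq_tendsto: "filterlim Rq at_top sequentially"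
proof -
  have "(\<lambda>p. \<tau> ^ p * \<delta>0) \<longlonglongrightarrow> 0"
    using tau_pos tau_lt1 by (intro tendsto_mult_left_zero LIMSEQ_power_zero) simp
  then have "filterlim (\<lambda>p. \<tau> ^ p * \<delta>0) (at_right 0) sequentially"
    by (rule tendsto_imp_filterlim_at_right) (simp add: scale_pos)
  from filterlim_compose[OF bc[unfolded backward_contracting_def] this]
  show ?thesis unfolding Rq_def by (simp add: o_def)
qed

lemma eventually_absorbed: "\<exists>Q. \<forall>p\<ge>Q. 2 * real d * A p \<le> \<tau> powr (t * real p / real d)"
proof -
  define C0 where "C0 = 2 * real d * 2 powr (t / real d) * K * \<tau> powr (- 2 * (t / real d))"
  have C0: "C0 > 0" using K_pos dpos tau_pos by (simp add: C0_def)
  have "(\<lambda>p. Rq p powr (- (t / real d))) \<longlonglongrightarrow> 0"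
    using tpos dpos by (intro tendsto_neg_powr Rq_tendsto) simp
  moreover have "0 < 1 / C0" using C0 by simp
  ultimately have "\<forall>\<^sub>F p in sequentially. Rq p powr (- (t / real d)) < 1 / C0"
    by (rule order_tendstoD(2))
  then obtain Q where Q: "\<And>p. p \<ge> Q \<Longrightarrow> C0 * Rq p powr (- (t / real d)) \<le> 1"
    using C0 unfolding eventually_sequentially by (metis less_imp_le pos_less_divide_eq mult.commute)
  have "2 * real d * A p \<le> \<tau> powr (t * real p / real d)" if "p \<ge> Q" for p
  proof -
    have "2 * real d * A p = C0 * Rq p powr (- (t / real d)) * \<tau> powr (t * real p / real d)"
      unfolding A_eq C0_def by (simp add: ac_simps)
    also have "\<dots> \<le> 1 * \<tau> powr (t * real p / real d)"
      using Q[OF that] by (intro mult_right_mono) auto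
    finally show ?thesis by simp
  qed
  then show ?thesis by blast
qed

definition "seq_weight q ns = real d ^ length ns * \<tau> powr (t * real (pseq d c V q ns) / real d)"

lemma seq_weight_nonneg: "seq_weight q ns \<ge> 0"
  by (simp add: seq_weight_def)

lemma seq_weight_Cons: "seq_weight q (n # ns) = real d * seq_weight (pn d c V n q) ns"
  by (simp add: seq_weight_def)

lemma fiber_sum_le:
  fixes n :: nat
  assumes fin: "finite Fs" and S: "Fs \<subseteq> Sset d c V q"
  defines "G \<equiv> {ns. n # ns \<in> Fs \<and> ns \<noteq> []}"
  shows "finite G" "G \<subseteq> Sset d c V (pn d c V n q)"
    "sum (seq_weight q) {ns \<in> Fs. hd ns = n}
       \<le> real d * \<tau> powr (t * real (pn d c V n q) / real d) + real d * sum (seq_weight (pn d c V n q)) G"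
proof -
  have "G \<subseteq> tl ` Fs" unfolding G_def by (auto intro: image_eqI[of _ tl "n # _"])
  then show fG: "finite G" using fin finite_subset by blast
  show "G \<subseteq> Sset d c V (pn d c V n q)" using S by (auto simp: G_def Sset_def)
  have sub: "{ns \<in> Fs. hd ns = n} \<subseteq> insert [n] ((\<lambda>ns. n # ns) ` G)"
  proof
    fix ns assume a: "ns \<in> {ns \<in> Fs. hd ns = n}"
    then have "ns \<noteq> []" using S by (auto simp: Sset_def)
    then obtain ns' where "ns = n # ns'" using a by (cases ns) auto
    then show "ns \<in> insert [n] ((\<lambda>ns. n # ns) ` G)" using a by (cases "ns' = []") (auto simp: G_def)
  qed
  have "[n] \<notin> (\<lambda>ns. n # ns) ` G" by (auto simp: G_def)
  then have "sum (seq_weight q) (insert [n] ((\<lambda>ns. n # ns) ` G))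
      = seq_weight q [n] + sum (seq_weight q) ((\<lambda>ns. n # ns) ` G)"
    using fG by simp
  also have "sum (seq_weight q) ((\<lambda>ns. n # ns) ` G) = real d * sum (seq_weight (pn d c V n q)) G"
    by (simp add: sum.reindex sum_distrib_left seq_weight_Cons)
  finally show "sum (seq_weight q) {ns \<in> Fs. hd ns = n}
       \<le> real d * \<tau> powr (t * real (pn d c V n q) / real d) + real d * sum (seq_weight (pn d c V n q)) G"
    using sub fG sum_mono2[OF _ sub, of "seq_weight q"] seq_weight_nonneg
    by (simp add: seq_weight_def)
qed

lemma partial_sum_le:
  assumes Q: "\<forall>p\<ge>Q. 2 * real d * A p \<le> \<tau> powr (t * real p / real d)"
  shows "q \<ge> Q \<Longrightarrow> finite Fs \<Longrightarrow> Fs \<subseteq> Sset d c V q \<Longrightarrow> \<forall>ns\<in>Fs. length ns \<le> k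
         \<Longrightarrow> sum (seq_weight q) Fs \<le> 2 * real d * A q"
proof (induction k arbitrary: q Fs)
  case 0
  then have "Fs = {}" by (auto simp: Sset_def)
  then show ?case using A_nonneg[of q] by simp
next
  case (Suc k)
  define H where "H = hd ` Fs"
  have HN: "H \<subseteq> Nset d c V q"
  proof
    fix n assume "n \<in> H"
    then obtain ns where ns: "ns \<in> Fs" "hd ns = n" by (auto simp: H_def)
    then have "ns \<noteq> []" "admissible d c V q ns" using Suc.prems by (auto simp: Sset_def)
    then show "n \<in> Nset d c V q" using ns by (cases ns) auto
  qed
  have fiber: "sum (seq_weight q) {ns \<in> Fs. hd ns = n}
      \<le> 2 * real d * \<tau> powr (t * real (pn d c V n q) / real d)" if n: "n \<in> H" for n
  proof -
    define p where "p = pn d c V n q"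
    have pQ: "p \<ge> Q" using pn_props(1)[of n q] n HN Suc.prems(1) by (auto simp: p_def)
    define G where "G = {ns. n # ns \<in> Fs \<and> ns \<noteq> []}"
    note fib = fiber_sum_le[OF Suc.prems(2,3), of n, folded G_def p_def]
    have "\<forall>ns\<in>G. length ns \<le> k" using Suc.prems(4) by (auto simp: G_def)
    then have "sum (seq_weight p) G \<le> 2 * real d * A p" by (rule Suc.IH[OF pQ fib(1,2)])
    also have "\<dots> \<le> \<tau> powr (t * real p / real d)" using Q pQ by blast
    finally have "real d * sum (seq_weight p) G \<le> real d * \<tau> powr (t * real p / real d)"
      by (simp add: mult_left_mono)
    then show ?thesis using fib(3) by (simp add: p_def)
  qed
  have "sum (seq_weight q) Fs = (\<Sum>n\<in>H. sum (seq_weight q) {ns \<in> Fs. hd ns = n})"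
    unfolding H_def using Suc.prems(2) by (rule sum.image_gen)
  also have "\<dots> \<le> 2 * real d * (\<Sum>n\<in>H. \<tau> powr (t * real (pn d c V n q) / real d))"
    using fiber by (simp add: sum_distrib_left sum_mono)
  also have "\<dots> \<le> 2 * real d * A q"
    using Nset_sum_le[OF _ HN] Suc.prems(2) by (simp add: H_def mult_left_mono)
  finally show ?case .
qed

theorem Sset_sum_le:
  "\<exists>Q. \<forall>q\<ge>Q. infsum (\<lambda>ns. ennreal (seq_weight q ns)) (Sset d c V q) \<le> ennreal (2 * real d * A q)"
proof -
  obtain Q where Q: "\<forall>p\<ge>Q. 2 * real d * A p \<le> \<tau> powr (t * real p / real d)"
    using eventually_absorbed by blast
  have "infsum (\<lambda>ns. ennreal (seq_weight q ns)) (Sset d c V q) \<le> ennreal (2 * real d * A q)"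
    if q: "q \<ge> Q" for q
  proof (rule infsum_le_finite_sums)
    show "(\<lambda>ns. ennreal (seq_weight q ns)) summable_on Sset d c V q"
      by (rule nonneg_summable_on_complete) simp
    fix Fs assume fF: "finite Fs" and sF: "Fs \<subseteq> Sset d c V q"
    have "\<forall>ns\<in>Fs. length ns \<le> (\<Sum>ns\<in>Fs. length ns)" using fF by (auto intro: member_le_sum)
    then have "sum (seq_weight q) Fs \<le> 2 * real d * A q" by (rule partial_sum_le[OF Q q fF sF])
    then show "(\<Sum>ns\<in>Fs. ennreal (seq_weight q ns)) \<le> ennreal (2 * real d * A q)"
      using seq_weight_nonneg by (simp add: sum_ennreal ennreal_leI)
  qed
  then show ?thesis by blast
qed

end

theorem lemma5p3:
  fixes d :: nat and c :: complex and t \<delta>0 :: real and V :: "nat \<Rightarrow> complex set"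
  assumes d2: "d \<ge> 2"
    and nonper: "\<forall>n\<ge>1. (fmap d c ^^ n) 0 \<noteq> 0"
    and recur: "\<forall>\<epsilon>>0. \<forall>N. \<exists>n\<ge>N. n \<ge> 1 \<and> norm ((fmap d c ^^ n) 0) < \<epsilon>"
    and bc: "backward_contracting d c"
    and tpos: "t > 0"
    and d0pos: "\<delta>0 > 0"
    and Rbig: "\<forall>\<delta>. 0 < \<delta> \<and> \<delta> \<le> \<delta>0 \<longrightarrow> Rfun d c \<delta> > 2 / tau d"
    and Vnice: "\<forall>q. nice d c (V q)"
    and Vin: "\<forall>q. tB d (tau d ^ q * \<delta>0 / 2) \<subseteq> V q \<and> V q \<subseteq> tB d (tau d ^ q * \<delta>0)"
    and Vsum: "\<forall>q. infsum (\<lambda>Y. ennreal (diameter (fmap d c ` Y) powr (t / real d)))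
                        (children d c (V q))
                 \<le> ennreal ((1 - 2 powr (- t / real d)) powr (-1)
                      * (tau d ^ q * \<delta>0 / Rfun d c (tau d ^ q * \<delta>0)) powr (t / real d))"
  shows "\<exists>Q. \<forall>q\<ge>Q.
           infsum (\<lambda>ns. ennreal (real d ^ length ns
                      * tau d powr (t * real (pseq d c V q ns) / real d)))
                  (Sset d c V q)
           \<le> ennreal (2 powr (1 + t / real d) * real d * (1 - 2 powr (- t / real d)) powr (-1)
                * (Rfun d c (tau d ^ q * \<delta>0) powr (-1) * tau d powr (real q - 2)) powr (t / real d))"
proof -
  interpret backward_setup d c t \<delta>0 V
    using d2 nonper bc tpos d0pos Rbig Vnice Vin Vsum by unfold_locales
  have "2 * real d * A q = 2 powr (1 + t / real d) * real d * (1 - 2 powr (- t / real d)) powr (-1)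
          * (Rfun d c (tau d ^ q * \<delta>0) powr (-1) * tau d powr (real q - 2)) powr (t / real d)" for q
    by (simp add: A_def Rq_def K_def powr_add ac_simps)
  then show ?thesis using Sset_sum_le by (simp add: seq_weight_def)
qed

end
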